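(* Let $n \geq 12$ and let $\Gamma_n$ be the group with presentation $$\Gamma_n = \langle s, x \mid [s^n, x] = 1,\ [x, s^i x s^{-i}] = 1 \text{ for } 1 \leq i \leq n-1 \rangle.$$ Let $S_1 = \{s, x\}$, $S_2 = \{s^{-1}, x\}$, $S_3 = \{s, x^{-1}\}$, $S_4 = \{s^{-1}, x^{-1}\}$. Then there exist elements $f_1, f_2, f_3, f_4, g_1, g_2, g_3, g_4 \in \Gamma_n$ such that: (i) $\langle f_1, f_2, f_3, f_4 \rangle \cong \langle g_1, g_2, g_3, g_4 \rangle \cong \mathbb{Z}^4$; (ii) each of $f_1, f_2, f_3, f_4$ can be represented by a positive word in the alphabet $S_1$; (iii) for every $1 \leq i \leq 4$, the element $g_i$ can be represented by a positive word in the alphabet $S_i$.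
   Context: $[a,b]$ denotes the commutator of $a$ and $b$. Let $G$ be a group and $S \subseteq G \setminus \{1\}$ a subset such that $x \in S$ implies $x^{-1} \notin S$. A non-trivial reduced word $W = y_1^{m_1} \cdots y_k^{m_k}$ is a positive word in the alphabet $S$ if $y_1, \dots, y_k \in S$ and all exponents $m_1, \dots, m_k$ are positive integers. An element is represented by such a word if it equals the product in $G$. *)

theory Defs
  imports "HOL-Algebra.Algebra"
begin

datatype gen = GS | GX

text \<open>A letter is a generator together with a flag: True means the inverse generator.\<close>
type_synonym letter = "gen \<times> bool"
type_synonym word = "letter list"

definition inv_letter :: "letter \<Rightarrow> letter" where
  "inv_letter a = (fst a, \<not> snd a)"

definition inv_word :: "word \<Rightarrow> word" where
  "inv_word w = rev (map inv_letter w)"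

definition comm_word :: "word \<Rightarrow> word \<Rightarrow> word" where
  "comm_word a b = a @ b @ inv_word a @ inv_word b"

definition pow_word :: "word \<Rightarrow> nat \<Rightarrow> word" where
  "pow_word w k = concat (replicate k w)"

definition s_word :: word where "s_word = [(GS, False)]"
definition x_word :: word where "x_word = [(GX, False)]"

definition rels :: "nat \<Rightarrow> word set" where
  "rels n = {comm_word (pow_word s_word n) x_word} \<union>
     {comm_word x_word (pow_word s_word i @ x_word @ inv_word (pow_word s_word i)) | i.
        1 \<le> i \<and> i \<le> n - 1}"

inductive word_eqv :: "word set \<Rightarrow> word \<Rightarrow> word \<Rightarrow> bool" for R where
  refl: "word_eqv R u u"
| sym: "word_eqv R u v \<Longrightarrow> word_eqv R v u"
| trans: "word_eqv R u v \<Longrightarrow> word_eqv R v w \<Longrightarrow> word_eqv R u w"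
| cancel: "word_eqv R (u @ [a, inv_letter a] @ v) (u @ v)"
| relator: "r \<in> R \<Longrightarrow> word_eqv R (u @ r @ v) (u @ v)"

definition word_rel :: "word set \<Rightarrow> (word \<times> word) set" where
  "word_rel R = {(u, v). word_eqv R u v}"

definition presented_group :: "word set \<Rightarrow> word set monoid" where
  "presented_group R =
     \<lparr> carrier = UNIV // word_rel R,
       monoid.mult = (\<lambda>A B. word_rel R `` {a @ b | a b. a \<in> A \<and> b \<in> B}),
       one = word_rel R `` {[]} \<rparr>"

definition Gamma :: "nat \<Rightarrow> word set monoid" where
  "Gamma n = presented_group (rels n)"

definition gen_s :: "nat \<Rightarrow> word set" where "gen_s n = word_rel (rels n) `` {s_word}"
definition gen_x :: "nat \<Rightarrow> word set" where "gen_x n = word_rel (rels n) `` {x_word}"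

text \<open>g is represented by a non-trivial reduced word y_1^m_1 ... y_k^m_k with
  all y_i in S (consecutive letters distinct) and all m_i positive.\<close>
definition pos_word_rep :: "('a, 'b) monoid_scheme \<Rightarrow> 'a set \<Rightarrow> 'a \<Rightarrow> bool" where
  "pos_word_rep G S g \<longleftrightarrow>
     (\<exists>ys ms. length ys = length ms \<and> ys \<noteq> [] \<and> set ys \<subseteq> S
        \<and> (\<forall>i. Suc i < length ys \<longrightarrow> ys ! i \<noteq> ys ! Suc i)
        \<and> (\<forall>m \<in> set ms. (0::nat) < m)
        \<and> g = foldr (\<lambda>(y, m) acc. (y [^]\<^bsub>G\<^esub> m) \<otimes>\<^bsub>G\<^esub> acc) (zip ys ms) \<one>\<^bsub>G\<^esub>)"

abbreviation Z4 :: "(int \<times> int \<times> int \<times> int) monoid" where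
  "Z4 \<equiv> integer_group \<times>\<times> integer_group \<times>\<times> integer_group \<times>\<times> integer_group"

end

theory Submission
  imports Defs
begin

text \<open>
  Write \<open>c = s\<^sup>n\<close> and \<open>x\<^sub>k = s\<^sup>k x s\<^sup>-\<^sup>k\<close>. The relators say that \<open>c\<close> is central
  and that \<open>x\<^sub>k\<close> and \<open>x\<^sub>l\<close> commute whenever \<open>|k - l| < n\<close>, so the elements
  \<open>f = (c, x, x\<^sub>1 c, x\<^sub>2 c)\<close> and
  \<open>g = (c, x\<^sub>-\<^sub>1 c\<^sup>-\<^sup>1, x\<^sub>1\<^sup>-\<^sup>1 c, x\<^sub>-\<^sub>2\<^sup>-\<^sup>1 c\<^sup>-\<^sup>1)\<close> pairwise commute. The identity
  \<open>s\<^sup>k y s\<^sup>n\<^sup>-\<^sup>k = (s\<^sup>k y s\<^sup>-\<^sup>k) c\<close> (and its analogue for \<open>s\<^sup>-\<^sup>1\<close>) writes every member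
  other than \<open>c = s\<^sup>n\<close> and \<open>x\<close> as a positive word \<open>a\<^sup>k b a\<^sup>n\<^sup>-\<^sup>k\<close> with
  \<open>a \<in> {s, s\<^sup>-\<^sup>1}\<close> and \<open>b \<in> {x, x\<^sup>-\<^sup>1}\<close> taken from the required alphabet. Independence is detected in the
  unrestricted wreath product of \<open>\<int>\<close> by \<open>\<int>\<close>, i.e. \<open>\<int>\<^sup>\<int>\<close> extended by the shift
  action of \<open>\<int>\<close>: sending \<open>s\<close> to the unit shift and \<open>x\<close> to the
  indicator function of \<open>n\<int>\<close> kills the relators, maps \<open>c\<close> to the shift by \<open>n\<close> and
  \<open>x\<^sub>k\<close> to the indicator of \<open>k + n\<int>\<close>. On elements with \<open>n\<close>-periodic function part
  and shift in \<open>n\<int>\<close> the wreath product is just pointwise addition, and there the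
  images of each family are linearly independent.
\<close>

section \<open>Words and presented groups\<close>

lemma word_eqv_cong: "word_eqv R u v \<Longrightarrow> word_eqv R (p @ u @ q) (p @ v @ q)"
proof (induction rule: word_eqv.induct)
  case (cancel u a v)
  show ?case using word_eqv.cancel[of R "p @ u" a "v @ q"] by simp
next
  case (relator r u v)
  show ?case using word_eqv.relator[OF relator.hyps, of "p @ u" "v @ q"] by simp
qed (auto intro: word_eqv.intros)

lemma word_eqv_append:
  assumes "word_eqv R u u'" and "word_eqv R v v'"
  shows "word_eqv R (u @ v) (u' @ v')"
proof -
  have "word_eqv R (u @ v) (u' @ v)" using word_eqv_cong[OF assms(1), of "[]" v] by simp
  moreover have "word_eqv R (u' @ v) (u' @ v')" using word_eqv_cong[OF assms(2), of u' "[]"] by simp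
  ultimately show ?thesis by (rule word_eqv.trans)
qed

lemma inv_letter_inv_letter [simp]: "inv_letter (inv_letter a) = a"
  by (simp add: inv_letter_def)

lemma inv_word_inv_word [simp]: "inv_word (inv_word w) = w"
  by (simp add: inv_word_def rev_map comp_def)

lemma inv_word_Nil [simp]: "inv_word [] = []"
  by (simp add: inv_word_def)

lemma inv_word_append: "inv_word (u @ v) = inv_word v @ inv_word u"
  by (simp add: inv_word_def)

lemma inv_word_Cons: "inv_word (a # w) = inv_word w @ [inv_letter a]"
  by (simp add: inv_word_def)

lemma word_eqv_append_inv_word: "word_eqv R (w @ inv_word w) []"
proof (induction w)
  case Nil
  show ?case by (simp add: word_eqv.refl)
next
  case (Cons a w)
  have "word_eqv R ([a] @ (w @ inv_word w) @ [inv_letter a]) ([a] @ [] @ [inv_letter a])"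
    using word_eqv_cong[OF Cons.IH] .
  with word_eqv.cancel[of R "[]" a "[]"] show ?case
    by (simp add: inv_word_Cons) (rule word_eqv.trans)
qed

lemma word_eqv_inv_word_append: "word_eqv R (inv_word w @ w) []"
  using word_eqv_append_inv_word[of R "inv_word w"] by simp

definition word_class :: "word set \<Rightarrow> word \<Rightarrow> word set" where
  "word_class R w = word_rel R `` {w}"

lemma equiv_word_rel: "equiv UNIV (word_rel R)"
  by (rule equivI) (auto simp: word_rel_def refl_on_def sym_def trans_def intro: word_eqv.intros)

lemma word_class_eq_iff: "word_class R u = word_class R v \<longleftrightarrow> word_eqv R u v"
  using eq_equiv_class_iff[OF equiv_word_rel] by (simp add: word_class_def word_rel_def)

lemma mem_word_class_iff: "v \<in> word_class R w \<longleftrightarrow> word_eqv R w v"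
  by (simp add: word_class_def word_rel_def)

lemma carrier_presented_group: "carrier (presented_group R) = range (word_class R)"
  by (auto simp: presented_group_def quotient_def word_class_def)

lemma word_class_in_carrier [simp]: "word_class R w \<in> carrier (presented_group R)"
  by (simp add: carrier_presented_group)

lemma presented_group_mult:
  "word_class R u \<otimes>\<^bsub>presented_group R\<^esub> word_class R v = word_class R (u @ v)"
proof -
  have "word_rel R `` {a @ b | a b. a \<in> word_class R u \<and> b \<in> word_class R v} = word_class R (u @ v)"
  proof (intro equalityI subsetI)
    fix z assume "z \<in> word_rel R `` {a @ b | a b. a \<in> word_class R u \<and> b \<in> word_class R v}"
    then obtain a b where "word_eqv R u a" "word_eqv R v b" "word_eqv R (a @ b) z"
      by (auto simp: word_rel_def mem_word_class_iff)
    then show "z \<in> word_class R (u @ v)"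
      by (metis mem_word_class_iff word_eqv.trans word_eqv_append)
  next
    fix z assume "z \<in> word_class R (u @ v)"
    then show "z \<in> word_rel R `` {a @ b | a b. a \<in> word_class R u \<and> b \<in> word_class R v}"
      by (auto simp: word_class_def word_rel_def intro: word_eqv.refl)
  qed
  then show ?thesis by (simp add: presented_group_def)
qed

lemma presented_group_one: "\<one>\<^bsub>presented_group R\<^esub> = word_class R []"
  by (simp add: presented_group_def word_class_def)

lemma group_presented_group: "group (presented_group R)"
proof (rule groupI)
  fix y assume "y \<in> carrier (presented_group R)"
  then obtain w where w: "y = word_class R w" by (auto simp: carrier_presented_group)
  have "word_class R (inv_word w) \<otimes>\<^bsub>presented_group R\<^esub> y = \<one>\<^bsub>presented_group R\<^esub>"
    unfolding w presented_group_mult presented_group_one word_class_eq_iff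
    by (rule word_eqv_inv_word_append)
  then show "\<exists>z\<in>carrier (presented_group R). z \<otimes>\<^bsub>presented_group R\<^esub> y = \<one>\<^bsub>presented_group R\<^esub>"
    using word_class_in_carrier by blast
next
  fix y z assume "y \<in> carrier (presented_group R)" "z \<in> carrier (presented_group R)"
  then show "y \<otimes>\<^bsub>presented_group R\<^esub> z \<in> carrier (presented_group R)"
    by (auto simp: carrier_presented_group presented_group_mult)
next
  fix y z u
  assume "y \<in> carrier (presented_group R)" "z \<in> carrier (presented_group R)"
    "u \<in> carrier (presented_group R)"
  then show "y \<otimes>\<^bsub>presented_group R\<^esub> z \<otimes>\<^bsub>presented_group R\<^esub> u
      = y \<otimes>\<^bsub>presented_group R\<^esub> (z \<otimes>\<^bsub>presented_group R\<^esub> u)"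
    by (auto simp: carrier_presented_group presented_group_mult)
next
  fix y assume "y \<in> carrier (presented_group R)"
  then show "\<one>\<^bsub>presented_group R\<^esub> \<otimes>\<^bsub>presented_group R\<^esub> y = y"
    by (auto simp: carrier_presented_group presented_group_mult presented_group_one)
qed (simp add: presented_group_one)

lemma presented_group_inv:
  "inv\<^bsub>presented_group R\<^esub> (word_class R w) = word_class R (inv_word w)"
  by (rule group.inv_equality[OF group_presented_group])
    (simp_all add: presented_group_mult presented_group_one word_class_eq_iff word_eqv_inv_word_append)

lemma presented_group_nat_pow:
  "word_class R w [^]\<^bsub>presented_group R\<^esub> (k::nat) = word_class R (pow_word w k)"
proof (induction k)
  case (Suc k)
  have "word_class R w [^]\<^bsub>presented_group R\<^esub> Suc k
      = word_class R w \<otimes>\<^bsub>presented_group R\<^esub> word_class R w [^]\<^bsub>presented_group R\<^esub> k"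
    by (rule monoid.nat_pow_Suc2[OF group.is_monoid[OF group_presented_group] word_class_in_carrier])
  then show ?case by (simp add: Suc.IH presented_group_mult pow_word_def)
qed (simp add: pow_word_def presented_group_one)

lemma presented_group_commute_of_relator:
  assumes "comm_word a b \<in> R"
  shows "word_class R a \<otimes>\<^bsub>presented_group R\<^esub> word_class R b
       = word_class R b \<otimes>\<^bsub>presented_group R\<^esub> word_class R a"
proof -
  interpret group "presented_group R" by (rule group_presented_group)
  have "word_class R a \<otimes>\<^bsub>presented_group R\<^esub> word_class R b \<otimes>\<^bsub>presented_group R\<^esub>
      inv\<^bsub>presented_group R\<^esub> (word_class R b \<otimes>\<^bsub>presented_group R\<^esub> word_class R a)
      = word_class R (comm_word a b)"
    by (simp add: inv_mult_group presented_group_inv presented_group_mult comm_word_def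
        inv_word_append)
  also have "\<dots> = \<one>\<^bsub>presented_group R\<^esub>"
    using word_eqv.relator[OF assms, of "[]" "[]"] by (simp add: presented_group_one word_class_eq_iff)
  finally show ?thesis by (simp add: inv_solve_right')
qed

lemma presented_group_generate:
  "carrier (presented_group R) = generate (presented_group R) (range (\<lambda>g. word_class R [(g, False)]))"
  (is "_ = generate ?G ?X")
proof -
  interpret group ?G by (rule group_presented_group)
  have "word_class R w \<in> generate ?G ?X" for w
  proof (induction w)
    case Nil
    show ?case by (simp add: presented_group_one[symmetric] generate.one)
  next
    case (Cons a w)
    obtain g i where a: "a = (g, i)" by fastforce
    have "word_class R [a] \<in> generate ?G ?X"
    proof (cases i)
      case True
      have "word_class R [a] = inv\<^bsub>?G\<^esub> word_class R [(g, False)]"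
        by (simp add: a True presented_group_inv inv_word_def inv_letter_def)
      then show ?thesis by (auto intro: generate.inv)
    qed (auto simp: a intro: generate.incl)
    from generate.eng[OF this Cons.IH] show ?case by (simp add: presented_group_mult)
  qed
  then have "carrier ?G \<subseteq> generate ?G ?X"
    by (auto simp: carrier_presented_group)
  moreover have "generate ?G ?X \<subseteq> carrier ?G"
    by (rule generate_incl) (auto simp: carrier_presented_group)
  ultimately show ?thesis by (rule equalityI)
qed

definition eval_word :: "('a, 'b) monoid_scheme \<Rightarrow> (gen \<Rightarrow> 'a) \<Rightarrow> word \<Rightarrow> 'a" where
  "eval_word G \<phi> w = foldr (\<lambda>(g, i) y. (if i then inv\<^bsub>G\<^esub> \<phi> g else \<phi> g) \<otimes>\<^bsub>G\<^esub> y) w \<one>\<^bsub>G\<^esub>"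

lemma eval_word_Nil [simp]: "eval_word G \<phi> [] = \<one>\<^bsub>G\<^esub>"
  by (simp add: eval_word_def)

lemma eval_word_Cons [simp]:
  "eval_word G \<phi> ((g, i) # w) = (if i then inv\<^bsub>G\<^esub> \<phi> g else \<phi> g) \<otimes>\<^bsub>G\<^esub> eval_word G \<phi> w"
  by (simp add: eval_word_def)

context group
begin

context
  fixes \<phi> :: "gen \<Rightarrow> 'a"
  assumes \<phi>_closed [simp]: "\<And>g. \<phi> g \<in> carrier G"
begin

lemma eval_word_closed [simp]: "eval_word G \<phi> w \<in> carrier G"
  by (induction w) auto

lemma eval_word_append: "eval_word G \<phi> (u @ v) = eval_word G \<phi> u \<otimes> eval_word G \<phi> v"
  by (induction u) (auto simp: m_assoc)

lemma eval_word_inv_word: "eval_word G \<phi> (inv_word w) = inv (eval_word G \<phi> w)"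
proof (induction w)
  case (Cons a w)
  obtain g i where "a = (g, i)" by fastforce
  with Cons.IH show ?case
    by (auto simp: inv_word_Cons eval_word_append inv_letter_def inv_mult_group)
qed simp

lemma eval_word_pow_word: "eval_word G \<phi> (pow_word w k) = eval_word G \<phi> w [^] k"
  by (induction k) (simp_all add: pow_word_def eval_word_append nat_pow_Suc2[symmetric])

lemma eval_word_comm_word:
  assumes "eval_word G \<phi> a \<otimes> eval_word G \<phi> b = eval_word G \<phi> b \<otimes> eval_word G \<phi> a"
  shows "eval_word G \<phi> (comm_word a b) = \<one>"
proof -
  have "eval_word G \<phi> (comm_word a b)
      = eval_word G \<phi> a \<otimes> eval_word G \<phi> b \<otimes> inv (eval_word G \<phi> b \<otimes> eval_word G \<phi> a)"
    by (simp add: comm_word_def eval_word_append eval_word_inv_word inv_mult_group m_assoc)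
  then show ?thesis by (simp add: assms)
qed

lemma eval_word_word_eqv:
  assumes "\<And>r. r \<in> R \<Longrightarrow> eval_word G \<phi> r = \<one>" and "word_eqv R u v"
  shows "eval_word G \<phi> u = eval_word G \<phi> v"
  using assms(2)
proof (induction rule: word_eqv.induct)
  case (cancel u a v)
  obtain g i where "a = (g, i)" by fastforce
  then show ?case
    by (auto simp: eval_word_append inv_letter_def m_assoc[symmetric]) (simp_all add: m_assoc)
qed (simp_all add: eval_word_append assms(1))

end

end

definition induced_hom :: "('a, 'b) monoid_scheme \<Rightarrow> (gen \<Rightarrow> 'a) \<Rightarrow> word set \<Rightarrow> 'a" where
  "induced_hom G \<phi> A = eval_word G \<phi> (SOME w. w \<in> A)"

context group
begin

context
  fixes \<phi> :: "gen \<Rightarrow> 'a" and R :: "word set"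
  assumes \<phi>_closed [simp]: "\<And>g. \<phi> g \<in> carrier G"
    and relators_trivial: "\<And>r. r \<in> R \<Longrightarrow> eval_word G \<phi> r = \<one>"
begin

lemma induced_hom_word_class: "induced_hom G \<phi> (word_class R w) = eval_word G \<phi> w"
proof -
  have "(SOME v. v \<in> word_class R w) \<in> word_class R w"
    by (rule someI[of _ w]) (simp add: mem_word_class_iff word_eqv.refl)
  then show ?thesis
    unfolding induced_hom_def mem_word_class_iff
    by (simp add: eval_word_word_eqv[OF \<phi>_closed relators_trivial])
qed

lemma induced_hom_hom: "induced_hom G \<phi> \<in> hom (presented_group R) G"
  by (rule homI)
    (auto simp: carrier_presented_group presented_group_mult induced_hom_word_class
      eval_word_append[OF \<phi>_closed] eval_word_closed[OF \<phi>_closed])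

end

end

section \<open>Commuting elements and free abelian subgroups of rank four\<close>

definition centralizer :: "('a, 'b) monoid_scheme \<Rightarrow> 'a \<Rightarrow> 'a set" where
  "centralizer G a = {y \<in> carrier G. y \<otimes>\<^bsub>G\<^esub> a = a \<otimes>\<^bsub>G\<^esub> y}"

definition pow_prod4 :: "('a, 'b) monoid_scheme \<Rightarrow> (nat \<Rightarrow> 'a) \<Rightarrow> int \<times> int \<times> int \<times> int \<Rightarrow> 'a" where
  "pow_prod4 G h = (\<lambda>(a, b, c, d).
     h 1 [^]\<^bsub>G\<^esub> a \<otimes>\<^bsub>G\<^esub> h 2 [^]\<^bsub>G\<^esub> b \<otimes>\<^bsub>G\<^esub> h 3 [^]\<^bsub>G\<^esub> c \<otimes>\<^bsub>G\<^esub> h 4 [^]\<^bsub>G\<^esub> d)"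

lemma hom_pow_prod4:
  assumes "group G" "group H" "f \<in> hom G H" "h ` {1..4} \<subseteq> carrier G"
  shows "f (pow_prod4 G h p) = pow_prod4 H (f \<circ> h) p"
proof -
  interpret group_hom G H f
    using assms(1-3) by (simp add: group_hom_def group_hom_axioms_def)
  have "h i \<in> carrier G" if "i \<in> {1..4}" for i
    using assms(4) that by blast
  then show ?thesis
    by (cases p) (simp add: pow_prod4_def hom_int_pow)
qed

context group
begin

lemma subgroup_centralizer: "a \<in> carrier G \<Longrightarrow> subgroup (centralizer G a) G"
proof (rule subgroupI)
  fix y assume a: "a \<in> carrier G" and "y \<in> centralizer G a"
  then have y: "y \<in> carrier G" and ya: "y \<otimes> a = a \<otimes> y"
    by (auto simp: centralizer_def)
  have "inv y \<otimes> a = inv y \<otimes> (a \<otimes> y) \<otimes> inv y"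
    using a y by (simp add: m_assoc)
  also have "\<dots> = a \<otimes> inv y"
    using a y by (simp add: ya[symmetric] m_assoc[symmetric])
  finally show "inv y \<in> centralizer G a"
    using y by (simp add: centralizer_def)
next
  fix y z assume "a \<in> carrier G" "y \<in> centralizer G a" "z \<in> centralizer G a"
  then show "y \<otimes> z \<in> centralizer G a"
    by (auto simp: centralizer_def m_assoc) (metis m_assoc)
qed (auto simp: centralizer_def)

lemma commute_int_pow:
  assumes "a \<in> carrier G" "b \<in> carrier G" "a \<otimes> b = b \<otimes> a"
  shows "a [^] (i::int) \<otimes> b [^] (j::int) = b [^] j \<otimes> a [^] i"
proof -
  have "b [^] j \<in> centralizer G a"
    using assms by (intro subgroup_int_pow_closed[OF subgroup_centralizer]) (auto simp: centralizer_def)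
  then have "a [^] i \<in> centralizer G (b [^] j)"
    using assms(1) by (intro subgroup_int_pow_closed[OF subgroup_centralizer]) (auto simp: centralizer_def)
  then show ?thesis by (simp add: centralizer_def)
qed

lemma commute_mult:
  assumes "y \<in> carrier G" "a \<in> carrier G" "b \<in> carrier G"
    and "y \<otimes> a = a \<otimes> y" "y \<otimes> b = b \<otimes> y"
  shows "y \<otimes> (a \<otimes> b) = (a \<otimes> b) \<otimes> y"
  using assms by (metis m_assoc)

lemma generate_commute:
  assumes "H \<subseteq> carrier G" and comm: "\<And>a b. a \<in> H \<Longrightarrow> b \<in> H \<Longrightarrow> a \<otimes> b = b \<otimes> a"
    and "y \<in> generate G H" "z \<in> generate G H"
  shows "y \<otimes> z = z \<otimes> y"
proof -
  have gen_centralizer: "generate G H \<subseteq> centralizer G a"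
    if "a \<in> carrier G" "\<And>b. b \<in> H \<Longrightarrow> b \<otimes> a = a \<otimes> b" for a
    using that assms(1) by (intro generate_subgroup_incl subgroup_centralizer) (auto simp: centralizer_def)
  have "generate G H \<subseteq> centralizer G z"
  proof (rule gen_centralizer)
    show "z \<in> carrier G" using generate_in_carrier[OF assms(1) assms(4)] .
    fix b assume "b \<in> H"
    with assms(1) comm have "generate G H \<subseteq> centralizer G b"
      by (intro gen_centralizer) auto
    with assms(4) show "b \<otimes> z = z \<otimes> b" by (auto simp: centralizer_def)
  qed
  with assms(3) show ?thesis by (auto simp: centralizer_def)
qed

end

lemma (in comm_group) pow_prod4_hom:
  assumes "h ` {1..4} \<subseteq> carrier G"
  shows "pow_prod4 G h \<in> hom Z4 G"
proof (rule homI)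
  have h: "h 1 \<in> carrier G" "h 2 \<in> carrier G" "h 3 \<in> carrier G" "h 4 \<in> carrier G"
    using assms by auto
  fix p q :: "int \<times> int \<times> int \<times> int"
  show "pow_prod4 G h p \<in> carrier G"
    using h by (cases p) (simp add: pow_prod4_def)
  show "pow_prod4 G h (p \<otimes>\<^bsub>Z4\<^esub> q) = pow_prod4 G h p \<otimes> pow_prod4 G h q"
    using h by (cases p, cases q) (simp add: pow_prod4_def int_pow_mult m_ac)
qed

lemma (in comm_group) generate_subset_pow_prod4_image:
  assumes "h ` {1..4} \<subseteq> carrier G"
  shows "generate G (h ` {1..4}) \<subseteq> pow_prod4 G h ` carrier Z4"
proof -
  interpret \<phi>: group_hom Z4 G "pow_prod4 G h"
    using pow_prod4_hom[OF assms] by (simp add: group_hom_def group_hom_axioms_def DirProd_group is_group)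
  have h: "h 1 \<in> carrier G" "h 2 \<in> carrier G" "h 3 \<in> carrier G" "h 4 \<in> carrier G"
    using assms by auto
  show ?thesis
  proof (rule generate_subgroup_incl[OF _ \<phi>.img_is_subgroup], rule image_subsetI)
    fix i :: nat assume "i \<in> {1..4}"
    then have "i = 1 \<or> i = 2 \<or> i = 3 \<or> i = 4" by auto
    then have "h i = pow_prod4 G h (of_bool (i = 1), of_bool (i = 2), of_bool (i = 3), of_bool (i = 4))"
      using h by (auto simp: pow_prod4_def)
    then show "h i \<in> pow_prod4 G h ` carrier Z4" by simp
  qed
qed

lemma (in group) generate_iso_Z4:
  assumes h: "h ` {1..4} \<subseteq> carrier G"
    and comm: "\<And>i j. i \<in> {1..4} \<Longrightarrow> j \<in> {1..4} \<Longrightarrow> h i \<otimes> h j = h j \<otimes> h i"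
    and inj: "inj (pow_prod4 G h)"
  shows "G\<lparr>carrier := generate G (h ` {1..4})\<rparr> \<cong> Z4"
proof -
  define K where "K = G\<lparr>carrier := generate G (h ` {1..4})\<rparr>"
  have sub: "subgroup (generate G (h ` {1..4})) G"
    using generate_is_subgroup[OF h] .
  interpret K: comm_group K
    unfolding K_def
    by (rule group.group_comm_groupI[OF subgroup_imp_group[OF sub]])
      (auto intro: generate_commute[OF h] comm)
  have hK: "h ` {1..4} \<subseteq> carrier K"
    by (auto simp: K_def intro: generate.incl)
  have "pow_prod4 K h = pow_prod4 G h"
  proof
    fix p
    have "h 1 \<in> generate G (h ` {1..4})" "h 2 \<in> generate G (h ` {1..4})"
      "h 3 \<in> generate G (h ` {1..4})" "h 4 \<in> generate G (h ` {1..4})"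
      by (auto intro: generate.incl)
    then show "pow_prod4 K h p = pow_prod4 G h p"
      by (cases p) (simp add: pow_prod4_def K_def int_pow_consistent[OF sub])
  qed
  moreover have "pow_prod4 K h \<in> iso Z4 K"
  proof -
    have hom: "pow_prod4 K h \<in> hom Z4 K"
      by (rule K.pow_prod4_hom[OF hK])
    have "carrier K = generate K (h ` {1..4})"
      using generate_consistent[OF _ sub] by (auto simp: K_def intro: generate.incl)
    also have "\<dots> \<subseteq> pow_prod4 K h ` carrier Z4"
      by (rule K.generate_subset_pow_prod4_image[OF hK])
    finally have "pow_prod4 K h ` carrier Z4 = carrier K"
      using hom_in_carrier[OF hom] by blast
    with inj hom show ?thesis
      by (auto simp: iso_def bij_betw_def \<open>pow_prod4 K h = pow_prod4 G h\<close> intro: inj_on_subset)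
  qed
  ultimately have "Z4 \<cong> K" by (auto simp: is_iso_def)
  moreover have "group Z4" by (intro DirProd_group group_integer_group)
  ultimately show ?thesis
    unfolding K_def by (auto intro: group.iso_sym)
qed

context group
begin

lemma inv_mult_cancel_left [simp]:
  "a \<in> carrier G \<Longrightarrow> y \<in> carrier G \<Longrightarrow> inv a \<otimes> (a \<otimes> y) = y"
  "a \<in> carrier G \<Longrightarrow> y \<in> carrier G \<Longrightarrow> a \<otimes> (inv a \<otimes> y) = y"
  by (simp_all add: m_assoc[symmetric])

lemma conj_hom: "g \<in> carrier G \<Longrightarrow> (\<lambda>y. g \<otimes> y \<otimes> inv g) \<in> hom G G"
  by (intro homI) (simp_all add: m_assoc)

lemma conj_int_pow:
  assumes "g \<in> carrier G" "a \<in> carrier G"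
  shows "(g \<otimes> a \<otimes> inv g) [^] (k::int) = g \<otimes> a [^] k \<otimes> inv g"
  using hom_int_pow[OF conj_hom[OF assms(1)] assms(2) is_group is_group] by simp

lemma conj_commute:
  assumes "g \<in> carrier G" "a \<in> carrier G" "b \<in> carrier G" "a \<otimes> b = b \<otimes> a"
  shows "(g \<otimes> a \<otimes> inv g) \<otimes> (g \<otimes> b \<otimes> inv g) = (g \<otimes> b \<otimes> inv g) \<otimes> (g \<otimes> a \<otimes> inv g)"
  using hom_mult[OF conj_hom[OF assms(1)], of a b] hom_mult[OF conj_hom[OF assms(1)], of b a] assms
  by simp

lemma nat_pow_mult_nat_pow_diff:
  fixes k m :: nat
  assumes "a \<in> carrier G" "y \<in> carrier G" "k \<le> m"
  shows "a [^] k \<otimes> (y \<otimes> a [^] (m - k)) = (a [^] k \<otimes> y \<otimes> inv (a [^] k)) \<otimes> a [^] m"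
proof -
  have "a [^] m = a [^] k \<otimes> a [^] (m - k)"
    using assms by (simp add: nat_pow_mult)
  then show ?thesis
    using assms by (simp add: m_assoc)
qed

end

section \<open>The unrestricted wreath product of \<open>\<int>\<close> by \<open>\<int>\<close>\<close>

definition int_wreath_int :: "((int \<Rightarrow> int) \<times> int) monoid" where
  "int_wreath_int =
     \<lparr> carrier = UNIV,
       monoid.mult = (\<lambda>p q. (\<lambda>j. fst p j + fst q (j - snd p), snd p + snd q)),
       one = (\<lambda>_. 0, 0) \<rparr>"

lemma int_wreath_int_simps [simp]:
  "carrier int_wreath_int = UNIV"
  "p \<otimes>\<^bsub>int_wreath_int\<^esub> q = (\<lambda>j. fst p j + fst q (j - snd p), snd p + snd q)"
  "\<one>\<^bsub>int_wreath_int\<^esub> = (\<lambda>_. 0, 0)"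
  by (simp_all add: int_wreath_int_def)

lemma group_int_wreath_int: "group int_wreath_int"
proof (rule groupI)
  fix p :: "(int \<Rightarrow> int) \<times> int"
  have "(\<lambda>j. - fst p (j + snd p), - snd p) \<otimes>\<^bsub>int_wreath_int\<^esub> p = \<one>\<^bsub>int_wreath_int\<^esub>"
    by simp
  then show "\<exists>q\<in>carrier int_wreath_int. q \<otimes>\<^bsub>int_wreath_int\<^esub> p = \<one>\<^bsub>int_wreath_int\<^esub>"
    by (metis UNIV_I int_wreath_int_simps(1))
qed (simp_all add: algebra_simps)

interpretation W: group int_wreath_int
  by (rule group_int_wreath_int)

lemma int_wreath_int_inv: "inv\<^bsub>int_wreath_int\<^esub> p = (\<lambda>j. - fst p (j + snd p), - snd p)"
  by (rule W.inv_equality) simp_all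

lemma int_wreath_int_mult_pointwise:
  assumes "\<And>j. fst q (j - snd p) = fst q j"
  shows "p \<otimes>\<^bsub>int_wreath_int\<^esub> q = (\<lambda>j. fst p j + fst q j, snd p + snd q)"
  by (simp add: assms)

lemma int_wreath_int_int_pow:
  assumes periodic: "\<And>k j. fst p (j - k * snd p) = fst p j"
  shows "p [^]\<^bsub>int_wreath_int\<^esub> (k::int) = (\<lambda>j. k * fst p j, k * snd p)"
proof -
  define \<psi> where "\<psi> = (\<lambda>k::int. (\<lambda>j. k * fst p j, k * snd p))"
  have "\<psi> \<in> hom integer_group int_wreath_int"
    by (rule homI) (simp_all add: \<psi>_def periodic algebra_simps)
  from hom_int_pow[OF this _ group_integer_group group_int_wreath_int, of 1 k]
  have "\<psi> k = \<psi> 1 [^]\<^bsub>int_wreath_int\<^esub> k"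
    by simp
  then show ?thesis by (simp add: \<psi>_def)
qed

definition periodic_elements :: "nat \<Rightarrow> ((int \<Rightarrow> int) \<times> int) set" where
  "periodic_elements n = {p. (\<forall>j. fst p (j mod int n) = fst p j) \<and> int n dvd snd p}"

lemma periodic_elements_shift:
  assumes "q \<in> periodic_elements n" "int n dvd k"
  shows "fst q (j - k) = fst q j"
proof -
  have periodic: "fst q (i mod int n) = fst q i" for i
    using assms(1) by (simp add: periodic_elements_def)
  have "(j - k) mod int n = j mod int n"
    using assms(2) by (simp add: mod_eq_dvd_iff)
  then show ?thesis
    using periodic[of "j - k"] periodic[of j] by simp
qed

lemma periodic_elements_mult:
  assumes "p \<in> periodic_elements n" "q \<in> periodic_elements n"
  shows "p \<otimes>\<^bsub>int_wreath_int\<^esub> q = (\<lambda>j. fst p j + fst q j, snd p + snd q)"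
  using assms by (intro int_wreath_int_mult_pointwise periodic_elements_shift) (auto simp: periodic_elements_def)

lemma periodic_elements_int_pow:
  assumes "p \<in> periodic_elements n"
  shows "p [^]\<^bsub>int_wreath_int\<^esub> (k::int) = (\<lambda>j. k * fst p j, k * snd p)"
  using assms by (intro int_wreath_int_int_pow periodic_elements_shift) (auto simp: periodic_elements_def)

lemma periodic_elements_commute:
  assumes "p \<in> periodic_elements n" "q \<in> periodic_elements n"
  shows "p \<otimes>\<^bsub>int_wreath_int\<^esub> q = q \<otimes>\<^bsub>int_wreath_int\<^esub> p"
  unfolding periodic_elements_mult[OF assms] periodic_elements_mult[OF assms(2,1)] by (simp add: add.commute)

lemma pow_prod4_periodic_elements:
  assumes "\<And>i. i \<in> {1..4} \<Longrightarrow> q i \<in> periodic_elements n"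
  shows "pow_prod4 int_wreath_int q (a, b, c, d)
    = (\<lambda>j. a * fst (q 1) j + b * fst (q 2) j + c * fst (q 3) j + d * fst (q 4) j,
         a * snd (q 1) + b * snd (q 2) + c * snd (q 3) + d * snd (q 4))"
proof -
  have q: "q 1 \<in> periodic_elements n" "q 2 \<in> periodic_elements n"
    "q 3 \<in> periodic_elements n" "q 4 \<in> periodic_elements n"
    using assms by auto
  have shift: "fst (q i) (j - k) = fst (q i) j" if "i \<in> {1..4}" "int n dvd k" for i j k
    using periodic_elements_shift[OF assms] that by blast
  have dvd: "int n dvd snd (q i)" if "i \<in> {1..4}" for i
    using assms[OF that] by (simp add: periodic_elements_def)
  show ?thesis
    unfolding pow_prod4_def prod.case periodic_elements_int_pow[OF q(1)] periodic_elements_int_pow[OF q(2)]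
      periodic_elements_int_pow[OF q(3)] periodic_elements_int_pow[OF q(4)]
    by (simp add: shift dvd dvd_add dvd_mult)
qed

section \<open>The group \<open>\<Gamma>\<^sub>n\<close>\<close>

lemma (in monoid) pos_word_rep_nat_pow:
  assumes "a \<in> carrier G" "a \<in> S" "0 < m"
  shows "pos_word_rep G S (a [^] (m::nat))"
  unfolding pos_word_rep_def
  by (rule exI[of _ "[a]"], rule exI[of _ "[m]"]) (use assms in simp)

lemma (in monoid) pos_word_rep_pow_mult_pow:
  assumes "a \<in> carrier G" "b \<in> carrier G" "a \<noteq> b" "a \<in> S" "b \<in> S" "0 < k" "0 < m"
  shows "pos_word_rep G S (a [^] (k::nat) \<otimes> (b \<otimes> a [^] (m::nat)))"
proof -
  have "Suc i < length [a, b, a] \<Longrightarrow> [a, b, a] ! i \<noteq> [a, b, a] ! Suc i" for i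
    using assms(3) by (cases i) (auto simp: nth_Cons split: nat.split)
  then show ?thesis
    unfolding pos_word_rep_def
    by (intro exI[of _ "[a, b, a]"] exI[of _ "[k, 1, m]"]) (use assms in simp)
qed

definition multiples_indicator :: "nat \<Rightarrow> int \<Rightarrow> int" where
  "multiples_indicator n j = (if int n dvd j then 1 else 0)"

lemma multiples_indicator_cong:
  "a mod int n = b mod int n \<Longrightarrow> multiples_indicator n a = multiples_indicator n b"
  by (simp add: multiples_indicator_def dvd_eq_mod_eq_0)

lemma multiples_indicator_small:
  assumes "\<bar>t\<bar> < int n"
  shows "multiples_indicator n t = (if t = 0 then 1 else 0)"
  using assms zdvd_imp_le[of "int n" "\<bar>t\<bar>"] by (auto simp: multiples_indicator_def)

lemma shifted_indicator_periodic_elements: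
  "(\<lambda>j. e * multiples_indicator n (j - k), p * int n) \<in> periodic_elements n"
proof -
  have "multiples_indicator n (j mod int n - k) = multiples_indicator n (j - k)" for j
    by (rule multiples_indicator_cong) (simp add: mod_diff_left_eq)
  then show ?thesis
    by (simp add: periodic_elements_def)
qed

locale gamma =
  fixes n :: nat
begin

abbreviation "G \<equiv> Gamma n"
abbreviation "s \<equiv> gen_s n"
abbreviation "x \<equiv> gen_x n"
abbreviation "cl \<equiv> word_class (rels n)"

sublocale G: group "Gamma n"
  unfolding Gamma_def by (rule group_presented_group)

lemma Gamma_mult: "cl u \<otimes>\<^bsub>G\<^esub> cl v = cl (u @ v)"
  by (simp add: Gamma_def presented_group_mult)

lemma Gamma_nat_pow: "cl w [^]\<^bsub>G\<^esub> (k::nat) = cl (pow_word w k)"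
  by (simp add: Gamma_def presented_group_nat_pow)

lemma Gamma_inv: "inv\<^bsub>G\<^esub> cl w = cl (inv_word w)"
  by (simp add: Gamma_def presented_group_inv)

lemma s_eq: "s = cl s_word" and x_eq: "x = cl x_word"
  by (simp_all add: gen_s_def gen_x_def word_class_def)

lemma cl_closed [simp]: "cl w \<in> carrier G"
  by (simp add: Gamma_def)

lemma s_closed [simp]: "s \<in> carrier G" and x_closed [simp]: "x \<in> carrier G"
  by (simp_all add: s_eq x_eq)

lemma Gamma_commute_of_relator:
  "comm_word a b \<in> rels n \<Longrightarrow> cl a \<otimes>\<^bsub>G\<^esub> cl b = cl b \<otimes>\<^bsub>G\<^esub> cl a"
  unfolding Gamma_def by (rule presented_group_commute_of_relator)

definition gen_image :: "gen \<Rightarrow> (int \<Rightarrow> int) \<times> int" where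
  "gen_image g = (case g of GS \<Rightarrow> (\<lambda>_. 0, 1) | GX \<Rightarrow> (multiples_indicator n, 0))"

definition rep :: "word set \<Rightarrow> (int \<Rightarrow> int) \<times> int" where
  "rep = induced_hom int_wreath_int gen_image"

lemma eval_pow_s_word:
  "eval_word int_wreath_int gen_image (pow_word s_word k) = (\<lambda>_. 0, int k)"
proof -
  have "eval_word int_wreath_int gen_image (pow_word s_word k) = (\<lambda>_. 0, 1) [^]\<^bsub>int_wreath_int\<^esub> int k"
    by (simp add: W.eval_word_pow_word int_pow_int s_word_def gen_image_def)
  also have "\<dots> = (\<lambda>_. 0, int k)"
    by (simp add: int_wreath_int_int_pow)
  finally show ?thesis .
qed

lemma eval_word_rels:
  assumes "r \<in> rels n"
  shows "eval_word int_wreath_int gen_image r = \<one>\<^bsub>int_wreath_int\<^esub>"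
proof -
  have ev_x: "eval_word int_wreath_int gen_image x_word = (multiples_indicator n, 0)"
    by (simp add: x_word_def gen_image_def)
  have per_x: "(multiples_indicator n, 0) \<in> periodic_elements n"
    using shifted_indicator_periodic_elements[of 1 n 0 0] by simp
  from assms consider "r = comm_word (pow_word s_word n) x_word"
    | i where "r = comm_word x_word (pow_word s_word i @ x_word @ inv_word (pow_word s_word i))"
    unfolding rels_def by blast
  then show ?thesis
  proof cases
    case 1
    have "(\<lambda>_. 0, int n) \<in> periodic_elements n"
      by (simp add: periodic_elements_def)
    then have comm: "eval_word int_wreath_int gen_image (pow_word s_word n) \<otimes>\<^bsub>int_wreath_int\<^esub>
        eval_word int_wreath_int gen_image x_word
      = eval_word int_wreath_int gen_image x_word \<otimes>\<^bsub>int_wreath_int\<^esub>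
        eval_word int_wreath_int gen_image (pow_word s_word n)"
      unfolding eval_pow_s_word ev_x using per_x by (rule periodic_elements_commute)
    show ?thesis
      unfolding 1 by (rule W.eval_word_comm_word[OF _ comm]) simp
  next
    case (2 i)
    let ?conj = "pow_word s_word i @ x_word @ inv_word (pow_word s_word i)"
    have ev_conj: "eval_word int_wreath_int gen_image ?conj
        = (\<lambda>j. 1 * multiples_indicator n (j - int i), 0 * int n)"
      by (simp add: W.eval_word_append W.eval_word_inv_word eval_pow_s_word ev_x int_wreath_int_inv)
    have comm: "eval_word int_wreath_int gen_image x_word \<otimes>\<^bsub>int_wreath_int\<^esub>
        eval_word int_wreath_int gen_image ?conj
      = eval_word int_wreath_int gen_image ?conj \<otimes>\<^bsub>int_wreath_int\<^esub>
        eval_word int_wreath_int gen_image x_word"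
      unfolding ev_x ev_conj using per_x shifted_indicator_periodic_elements by (rule periodic_elements_commute)
    show ?thesis
      unfolding 2 by (rule W.eval_word_comm_word[OF _ comm]) simp
  qed
qed

lemma rep_hom: "rep \<in> hom G int_wreath_int"
  unfolding rep_def Gamma_def
  by (rule W.induced_hom_hom) (simp_all add: eval_word_rels)

sublocale rep: group_hom G int_wreath_int rep
  by (simp add: group_hom_def group_hom_axioms_def rep_hom group_int_wreath_int G.is_group)

lemma rep_s: "rep s = (\<lambda>_. 0, 1)" and rep_x: "rep x = (multiples_indicator n, 0)"
  by (simp_all add: rep_def s_eq x_eq W.induced_hom_word_class eval_word_rels
      s_word_def x_word_def gen_image_def)

definition s_n :: "word set" where
  "s_n = s [^]\<^bsub>G\<^esub> n"

definition conj_x :: "int \<Rightarrow> word set" where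
  "conj_x k = s [^]\<^bsub>G\<^esub> k \<otimes>\<^bsub>G\<^esub> x \<otimes>\<^bsub>G\<^esub> inv\<^bsub>G\<^esub> (s [^]\<^bsub>G\<^esub> k)"

definition conj_x_c :: "int \<Rightarrow> int \<Rightarrow> int \<Rightarrow> word set" where
  "conj_x_c k e p = conj_x k [^]\<^bsub>G\<^esub> e \<otimes>\<^bsub>G\<^esub> s_n [^]\<^bsub>G\<^esub> p"

lemma s_n_closed [simp]: "s_n \<in> carrier G"
  and conj_x_closed [simp]: "conj_x k \<in> carrier G"
  and conj_x_c_closed [simp]: "conj_x_c k e p \<in> carrier G"
  by (simp_all add: s_n_def conj_x_def conj_x_c_def)

lemma s_n_commute_x: "s_n \<otimes>\<^bsub>G\<^esub> x = x \<otimes>\<^bsub>G\<^esub> s_n"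
proof -
  have "comm_word (pow_word s_word n) x_word \<in> rels n"
    by (simp add: rels_def)
  from Gamma_commute_of_relator[OF this] show ?thesis
    by (simp add: s_n_def s_eq x_eq Gamma_nat_pow)
qed

lemma s_n_central: "y \<in> carrier G \<Longrightarrow> s_n \<otimes>\<^bsub>G\<^esub> y = y \<otimes>\<^bsub>G\<^esub> s_n"
proof -
  assume y: "y \<in> carrier G"
  have "range (\<lambda>g. cl [(g, False)]) \<subseteq> centralizer G s_n"
  proof (rule image_subsetI)
    fix g show "cl [(g, False)] \<in> centralizer G s_n"
    proof (cases g)
      case GS
      have "s \<otimes>\<^bsub>G\<^esub> s_n = s_n \<otimes>\<^bsub>G\<^esub> s"
        using G.nat_pow_Suc2[of s n] by (simp add: s_n_def)
      with GS show ?thesis by (simp add: centralizer_def s_eq s_word_def)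
    next
      case GX
      with s_n_commute_x show ?thesis by (simp add: centralizer_def x_eq x_word_def)
    qed
  qed
  then have "generate G (range (\<lambda>g. cl [(g, False)])) \<subseteq> centralizer G s_n"
    by (rule G.generate_subgroup_incl[OF _ G.subgroup_centralizer[OF s_n_closed]])
  then have "carrier G \<subseteq> centralizer G s_n"
    using presented_group_generate[of "rels n"] by (simp add: Gamma_def)
  with y show ?thesis by (auto simp: centralizer_def)
qed

lemma conj_x_0 [simp]: "conj_x 0 = x"
  by (simp add: conj_x_def)

lemma s_pow_conj_x: "s [^]\<^bsub>G\<^esub> i \<otimes>\<^bsub>G\<^esub> conj_x k \<otimes>\<^bsub>G\<^esub> inv\<^bsub>G\<^esub> (s [^]\<^bsub>G\<^esub> i) = conj_x (i + k)"
  by (simp add: conj_x_def G.int_pow_mult G.inv_mult_group G.m_assoc)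

lemma x_commute_conj_x:
  assumes "1 \<le> d" "d \<le> n - 1"
  shows "x \<otimes>\<^bsub>G\<^esub> conj_x (int d) = conj_x (int d) \<otimes>\<^bsub>G\<^esub> x"
proof -
  let ?w = "pow_word s_word d @ x_word @ inv_word (pow_word s_word d)"
  have "comm_word x_word ?w \<in> rels n"
    using assms by (auto simp: rels_def)
  then have "cl x_word \<otimes>\<^bsub>G\<^esub> cl ?w = cl ?w \<otimes>\<^bsub>G\<^esub> cl x_word"
    by (rule Gamma_commute_of_relator)
  moreover have "cl ?w = conj_x (int d)"
    by (simp add: conj_x_def int_pow_int s_eq x_eq Gamma_nat_pow Gamma_inv Gamma_mult G.m_assoc)
  ultimately show ?thesis
    by (simp add: x_eq)
qed

text \<open>Conjugating by \<open>s\<^sup>i\<close> reduces every commutation to a relator \<open>[x, s\<^sup>d x s\<^sup>-\<^sup>d]\<close>.\<close>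

lemma conj_x_commute:
  assumes "\<bar>i - j\<bar> < int n"
  shows "conj_x i \<otimes>\<^bsub>G\<^esub> conj_x j = conj_x j \<otimes>\<^bsub>G\<^esub> conj_x i"
proof -
  have less: "conj_x i \<otimes>\<^bsub>G\<^esub> conj_x j = conj_x j \<otimes>\<^bsub>G\<^esub> conj_x i" if "i < j" "j - i < int n" for i j
  proof -
    define d where "d = nat (j - i)"
    have d: "1 \<le> d" "d \<le> n - 1" "int d = j - i"
      using that by (auto simp: d_def)
    have "conj_x i = s [^]\<^bsub>G\<^esub> i \<otimes>\<^bsub>G\<^esub> x \<otimes>\<^bsub>G\<^esub> inv\<^bsub>G\<^esub> (s [^]\<^bsub>G\<^esub> i)"
      by (simp add: conj_x_def)
    moreover have "conj_x j = s [^]\<^bsub>G\<^esub> i \<otimes>\<^bsub>G\<^esub> conj_x (int d) \<otimes>\<^bsub>G\<^esub> inv\<^bsub>G\<^esub> (s [^]\<^bsub>G\<^esub> i)"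
      using s_pow_conj_x[of i "int d"] d(3) by simp
    ultimately show ?thesis
      using G.conj_commute[OF _ x_closed conj_x_closed x_commute_conj_x[OF d(1,2)]] by simp
  qed
  consider "i < j" | "i = j" | "j < i" by linarith
  then show ?thesis
  proof cases
    case 1 with assms less show ?thesis by simp
  next
    case 3 with assms less[of j i] show ?thesis by simp
  qed simp
qed

lemma conj_x_c_commute:
  assumes "\<bar>k - k'\<bar> < int n"
  shows "conj_x_c k e p \<otimes>\<^bsub>G\<^esub> conj_x_c k' e' p' = conj_x_c k' e' p' \<otimes>\<^bsub>G\<^esub> conj_x_c k e p"
proof -
  define A B where "A = conj_x k [^]\<^bsub>G\<^esub> e" and "B = conj_x k' [^]\<^bsub>G\<^esub> e'"
  define Z Z' where "Z = s_n [^]\<^bsub>G\<^esub> p" and "Z' = s_n [^]\<^bsub>G\<^esub> p'"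
  have closed: "A \<in> carrier G" "B \<in> carrier G" "Z \<in> carrier G" "Z' \<in> carrier G"
    by (simp_all add: A_def B_def Z_def Z'_def)
  have AB: "A \<otimes>\<^bsub>G\<^esub> B = B \<otimes>\<^bsub>G\<^esub> A"
    unfolding A_def B_def using conj_x_commute[OF assms] by (intro G.commute_int_pow) simp_all
  have central: "s_n [^]\<^bsub>G\<^esub> (q::int) \<otimes>\<^bsub>G\<^esub> y = y \<otimes>\<^bsub>G\<^esub> s_n [^]\<^bsub>G\<^esub> q" if "y \<in> carrier G" for q y
    using G.commute_int_pow[OF s_n_closed that s_n_central[OF that], of q 1] that by simp
  have "A \<otimes>\<^bsub>G\<^esub> (B \<otimes>\<^bsub>G\<^esub> Z') = (B \<otimes>\<^bsub>G\<^esub> Z') \<otimes>\<^bsub>G\<^esub> A"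
    using closed AB central[of A p'] by (intro G.commute_mult) (simp_all add: Z'_def)
  then have "(B \<otimes>\<^bsub>G\<^esub> Z') \<otimes>\<^bsub>G\<^esub> (A \<otimes>\<^bsub>G\<^esub> Z) = (A \<otimes>\<^bsub>G\<^esub> Z) \<otimes>\<^bsub>G\<^esub> (B \<otimes>\<^bsub>G\<^esub> Z')"
    using closed central[of "B \<otimes>\<^bsub>G\<^esub> Z'" p] by (intro G.commute_mult) (simp_all add: Z_def)
  then show ?thesis
    by (simp add: conj_x_c_def A_def B_def Z_def Z'_def)
qed

lemma rep_s_int_pow: "rep (s [^]\<^bsub>G\<^esub> (k::int)) = (\<lambda>_. 0, k)"
  by (simp add: rep.hom_int_pow rep_s int_wreath_int_int_pow)

lemma rep_x_int_pow: "rep (x [^]\<^bsub>G\<^esub> (k::int)) = (\<lambda>j. k * multiples_indicator n j, 0)"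
  using shifted_indicator_periodic_elements[of 1 n 0 0]
  by (simp add: rep.hom_int_pow rep_x periodic_elements_int_pow)

lemma rep_conj_x_c:
  "rep (conj_x_c k e p) = (\<lambda>j. e * multiples_indicator n (j - k), p * int n)"
proof -
  have conj: "rep (conj_x k) = (\<lambda>j. multiples_indicator n (j - k), 0)"
    by (simp add: conj_x_def rep_s_int_pow rep_x int_wreath_int_inv)
  have central: "rep s_n = (\<lambda>_. 0, int n)"
    using rep_s_int_pow[of "int n"] by (simp add: s_n_def int_pow_int)
  have "(\<lambda>j. multiples_indicator n (j - k), 0) \<in> periodic_elements n"
    using shifted_indicator_periodic_elements[of 1 n k 0] by simp
  moreover have "(\<lambda>_. 0, int n) \<in> periodic_elements n"
    by (simp add: periodic_elements_def)
  ultimately show ?thesis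
    by (simp add: conj_x_c_def rep.hom_int_pow conj central periodic_elements_int_pow)
qed

lemma rep_conj_x_c_periodic: "rep (conj_x_c k e p) \<in> periodic_elements n"
  unfolding rep_conj_x_c by (rule shifted_indicator_periodic_elements)

lemma s_pow_ne_x_pow:
  assumes "e \<noteq> 0"
  shows "s [^]\<^bsub>G\<^esub> (e::int) \<noteq> x [^]\<^bsub>G\<^esub> (e'::int)"
proof
  assume "s [^]\<^bsub>G\<^esub> e = x [^]\<^bsub>G\<^esub> e'"
  then have "snd (rep (s [^]\<^bsub>G\<^esub> e)) = snd (rep (x [^]\<^bsub>G\<^esub> e'))"
    by simp
  with assms show False
    by (simp add: rep_s_int_pow rep_x_int_pow)
qed

lemma generators_distinct:
  "s \<noteq> x" "inv\<^bsub>G\<^esub> s \<noteq> x" "s \<noteq> inv\<^bsub>G\<^esub> x" "inv\<^bsub>G\<^esub> s \<noteq> inv\<^bsub>G\<^esub> x"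
  using s_pow_ne_x_pow[of 1 1] s_pow_ne_x_pow[of "-1" 1] s_pow_ne_x_pow[of 1 "-1"]
    s_pow_ne_x_pow[of "-1" "-1"]
  by (simp_all add: G.int_pow_neg)

lemma conj_x_c_nonneg_eq:
  assumes "k \<le> n"
  shows "conj_x_c (int k) e 1 = s [^]\<^bsub>G\<^esub> k \<otimes>\<^bsub>G\<^esub> (x [^]\<^bsub>G\<^esub> e \<otimes>\<^bsub>G\<^esub> s [^]\<^bsub>G\<^esub> (n - k))"
proof -
  have "conj_x_c (int k) e 1
      = (s [^]\<^bsub>G\<^esub> k \<otimes>\<^bsub>G\<^esub> x [^]\<^bsub>G\<^esub> e \<otimes>\<^bsub>G\<^esub> inv\<^bsub>G\<^esub> (s [^]\<^bsub>G\<^esub> k)) \<otimes>\<^bsub>G\<^esub> s [^]\<^bsub>G\<^esub> n"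
    by (simp add: conj_x_c_def conj_x_def s_n_def G.conj_int_pow int_pow_int)
  then show ?thesis
    using G.nat_pow_mult_nat_pow_diff[of s "x [^]\<^bsub>G\<^esub> e" k n] assms by simp
qed

lemma conj_x_c_nonpos_eq:
  assumes "k \<le> n"
  shows "conj_x_c (- int k) e (- 1)
    = inv\<^bsub>G\<^esub> s [^]\<^bsub>G\<^esub> k \<otimes>\<^bsub>G\<^esub> (x [^]\<^bsub>G\<^esub> e \<otimes>\<^bsub>G\<^esub> inv\<^bsub>G\<^esub> s [^]\<^bsub>G\<^esub> (n - k))"
proof -
  have "s [^]\<^bsub>G\<^esub> (- int k) = inv\<^bsub>G\<^esub> s [^]\<^bsub>G\<^esub> k"
    by (simp add: G.int_pow_neg_int G.nat_pow_inv)
  then have "conj_x_c (- int k) e (- 1)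
      = (inv\<^bsub>G\<^esub> s [^]\<^bsub>G\<^esub> k \<otimes>\<^bsub>G\<^esub> x [^]\<^bsub>G\<^esub> e \<otimes>\<^bsub>G\<^esub> inv\<^bsub>G\<^esub> (inv\<^bsub>G\<^esub> s [^]\<^bsub>G\<^esub> k))
        \<otimes>\<^bsub>G\<^esub> inv\<^bsub>G\<^esub> s [^]\<^bsub>G\<^esub> n"
    by (simp add: conj_x_c_def conj_x_def s_n_def G.int_pow_neg G.nat_pow_inv
        G.conj_int_pow[of "inv\<^bsub>G\<^esub> (s [^]\<^bsub>G\<^esub> k)", simplified])
  then show ?thesis
    using G.nat_pow_mult_nat_pow_diff[of "inv\<^bsub>G\<^esub> s" "x [^]\<^bsub>G\<^esub> e" k n] assms by simp
qed

definition f_family :: "nat \<Rightarrow> word set" where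
  "f_family i = (if i = 1 then conj_x_c 0 0 1 else if i = 2 then conj_x_c 0 1 0
     else if i = 3 then conj_x_c 1 1 1 else conj_x_c 2 1 1)"

definition g_family :: "nat \<Rightarrow> word set" where
  "g_family i = (if i = 1 then conj_x_c 0 0 1 else if i = 2 then conj_x_c (- 1) 1 (- 1)
     else if i = 3 then conj_x_c 1 (- 1) 1 else conj_x_c (- 2) (- 1) (- 1))"

definition alphabet :: "nat \<Rightarrow> word set set" where
  "alphabet i = (if i = 1 then {s, x} else if i = 2 then {inv\<^bsub>G\<^esub> s, x}
     else if i = 3 then {s, inv\<^bsub>G\<^esub> x} else {inv\<^bsub>G\<^esub> s, inv\<^bsub>G\<^esub> x})"

lemma f_family_closed: "f_family ` {1..4} \<subseteq> carrier G"
  and g_family_closed: "g_family ` {1..4} \<subseteq> carrier G"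
  by (auto simp: f_family_def g_family_def)

lemma rep_pow_prod4:
  assumes "h ` {1..4} \<subseteq> carrier G" "\<And>i. i \<in> {1..4} \<Longrightarrow> rep (h i) \<in> periodic_elements n"
  shows "rep (pow_prod4 G h (a, b, c, d))
    = (\<lambda>j. a * fst (rep (h 1)) j + b * fst (rep (h 2)) j + c * fst (rep (h 3)) j + d * fst (rep (h 4)) j,
         a * snd (rep (h 1)) + b * snd (rep (h 2)) + c * snd (rep (h 3)) + d * snd (rep (h 4)))"
  using hom_pow_prod4[OF G.is_group group_int_wreath_int rep_hom assms(1)]
    pow_prod4_periodic_elements[of "rep \<circ> h" n] assms(2)
  by simp

context
  assumes n_ge_4: "4 \<le> n"
begin

lemma multiples_indicator_near_0:
  "\<bar>t\<bar> \<le> 3 \<Longrightarrow> multiples_indicator n t = (if t = 0 then 1 else 0)"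
  using n_ge_4 by (intro multiples_indicator_small) simp

lemma f_family_commute:
  "i \<in> {1..4} \<Longrightarrow> j \<in> {1..4} \<Longrightarrow> f_family i \<otimes>\<^bsub>G\<^esub> f_family j = f_family j \<otimes>\<^bsub>G\<^esub> f_family i"
  using n_ge_4 by (auto simp: f_family_def intro!: conj_x_c_commute)

lemma g_family_commute:
  "i \<in> {1..4} \<Longrightarrow> j \<in> {1..4} \<Longrightarrow> g_family i \<otimes>\<^bsub>G\<^esub> g_family j = g_family j \<otimes>\<^bsub>G\<^esub> g_family i"
  using n_ge_4 by (auto simp: g_family_def intro!: conj_x_c_commute)

lemma inj_pow_prod4_f_family: "inj (pow_prod4 G f_family)"
proof (rule injI)
  fix p q assume eq: "pow_prod4 G f_family p = pow_prod4 G f_family q"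
  obtain a1 a2 a3 a4 b1 b2 b3 b4 where pq: "p = (a1, a2, a3, a4)" "q = (b1, b2, b3, b4)"
    by (cases p, cases q) auto
  have per: "rep (f_family i) \<in> periodic_elements n" for i
    by (simp add: f_family_def rep_conj_x_c_periodic)
  from eq have "rep (pow_prod4 G f_family p) = rep (pow_prod4 G f_family q)"
    by simp
  then have F: "(\<lambda>j. a2 * multiples_indicator n j + a3 * multiples_indicator n (j - 1)
        + a4 * multiples_indicator n (j - 2), (a1 + a3 + a4) * int n)
      = (\<lambda>j. b2 * multiples_indicator n j + b3 * multiples_indicator n (j - 1)
        + b4 * multiples_indicator n (j - 2), (b1 + b3 + b4) * int n)"
    unfolding pq rep_pow_prod4[OF f_family_closed per]
    by (simp add: f_family_def rep_conj_x_c algebra_simps)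
  have "a2 = b2" "a3 = b3" "a4 = b4"
    using fun_cong[OF arg_cong[OF F, of fst], of 0] fun_cong[OF arg_cong[OF F, of fst], of 1]
      fun_cong[OF arg_cong[OF F, of fst], of 2]
    by (simp_all add: multiples_indicator_near_0)
  moreover have "a1 + a3 + a4 = b1 + b3 + b4"
    using arg_cong[OF F, of snd] n_ge_4 by simp
  ultimately show "p = q"
    using pq by simp
qed

lemma inj_pow_prod4_g_family: "inj (pow_prod4 G g_family)"
proof (rule injI)
  fix p q assume eq: "pow_prod4 G g_family p = pow_prod4 G g_family q"
  obtain a1 a2 a3 a4 b1 b2 b3 b4 where pq: "p = (a1, a2, a3, a4)" "q = (b1, b2, b3, b4)"
    by (cases p, cases q) auto
  have per: "rep (g_family i) \<in> periodic_elements n" for i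
    by (simp add: g_family_def rep_conj_x_c_periodic)
  from eq have "rep (pow_prod4 G g_family p) = rep (pow_prod4 G g_family q)"
    by simp
  then have F: "(\<lambda>j. a2 * multiples_indicator n (j + 1) - a3 * multiples_indicator n (j - 1)
        - a4 * multiples_indicator n (j + 2), (a1 - a2 + a3 - a4) * int n)
      = (\<lambda>j. b2 * multiples_indicator n (j + 1) - b3 * multiples_indicator n (j - 1)
        - b4 * multiples_indicator n (j + 2), (b1 - b2 + b3 - b4) * int n)"
    unfolding pq rep_pow_prod4[OF g_family_closed per]
    by (simp add: g_family_def rep_conj_x_c algebra_simps)
  have "a2 = b2" "a3 = b3" "a4 = b4"
    using fun_cong[OF arg_cong[OF F, of fst], of "-1"] fun_cong[OF arg_cong[OF F, of fst], of 1]
      fun_cong[OF arg_cong[OF F, of fst], of "-2"]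
    by (simp_all add: multiples_indicator_near_0)
  moreover have "a1 - a2 + a3 - a4 = b1 - b2 + b3 - b4"
    using arg_cong[OF F, of snd] n_ge_4 by simp
  ultimately show "p = q"
    using pq by simp
qed

lemma f_family_pos_word_rep: "i \<in> {1..4} \<Longrightarrow> pos_word_rep G (alphabet 1) (f_family i)"
proof -
  assume "i \<in> {1..4}"
  then consider "i = 1" | "i = 2" | "i = 3" | "i = 4" by fastforce
  then show ?thesis
  proof cases
    case 1
    then show ?thesis
      using n_ge_4 by (simp add: f_family_def alphabet_def conj_x_c_def s_n_def G.pos_word_rep_nat_pow)
  next
    case 2
    then show ?thesis
      using G.pos_word_rep_nat_pow[of x "{s, x}" 1] by (simp add: f_family_def alphabet_def conj_x_c_def)
  next
    case 3
    then show ?thesis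
      using n_ge_4 conj_x_c_nonneg_eq[of 1 1] generators_distinct
        G.pos_word_rep_pow_mult_pow[of s x "{s, x}" 1 "n - 1"]
      by (simp add: f_family_def alphabet_def)
  next
    case 4
    then show ?thesis
      using n_ge_4 conj_x_c_nonneg_eq[of 2 1] generators_distinct
        G.pos_word_rep_pow_mult_pow[of s x "{s, x}" 2 "n - 2"]
      by (simp add: f_family_def alphabet_def)
  qed
qed

lemma g_family_pos_word_rep: "i \<in> {1..4} \<Longrightarrow> pos_word_rep G (alphabet i) (g_family i)"
proof -
  assume "i \<in> {1..4}"
  then consider "i = 1" | "i = 2" | "i = 3" | "i = 4" by fastforce
  then show ?thesis
  proof cases
    case 1
    then show ?thesis
      using f_family_pos_word_rep[of 1] by (simp add: f_family_def g_family_def)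
  next
    case 2
    then show ?thesis
      using n_ge_4 conj_x_c_nonpos_eq[of 1 1] generators_distinct
        G.pos_word_rep_pow_mult_pow[of "inv\<^bsub>G\<^esub> s" x "{inv\<^bsub>G\<^esub> s, x}" 1 "n - 1"]
      by (simp add: g_family_def alphabet_def)
  next
    case 3
    then show ?thesis
      using n_ge_4 conj_x_c_nonneg_eq[of 1 "- 1"] generators_distinct
        G.pos_word_rep_pow_mult_pow[of s "inv\<^bsub>G\<^esub> x" "{s, inv\<^bsub>G\<^esub> x}" 1 "n - 1"]
      by (simp add: g_family_def alphabet_def G.int_pow_neg)
  next
    case 4
    then show ?thesis
      using n_ge_4 conj_x_c_nonpos_eq[of 2 "- 1"] generators_distinct
        G.pos_word_rep_pow_mult_pow[of "inv\<^bsub>G\<^esub> s" "inv\<^bsub>G\<^esub> x" "{inv\<^bsub>G\<^esub> s, inv\<^bsub>G\<^esub> x}" 2 "n - 2"]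
      by (simp add: g_family_def alphabet_def G.int_pow_neg)
  qed
qed

end

end

theorem proposition1p5:
  fixes n :: nat
  assumes "n \<ge> 12"
  defines "G \<equiv> Gamma n"
  defines "s \<equiv> gen_s n" and "x \<equiv> gen_x n"
  defines "S \<equiv> (\<lambda>i::nat. if i = 1 then {s, x}
                      else if i = 2 then {inv\<^bsub>G\<^esub> s, x}
                      else if i = 3 then {s, inv\<^bsub>G\<^esub> x}
                      else {inv\<^bsub>G\<^esub> s, inv\<^bsub>G\<^esub> x})"
  shows "\<exists>f g :: nat \<Rightarrow> word set.
           (\<forall>i\<in>{1..4}. f i \<in> carrier G \<and> g i \<in> carrier G)
         \<and> G\<lparr>carrier := generate G (f ` {1..4})\<rparr> \<cong> Z4
         \<and> G\<lparr>carrier := generate G (g ` {1..4})\<rparr> \<cong> Z4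
         \<and> (\<forall>i\<in>{1..4}. pos_word_rep G (S 1) (f i))
         \<and> (\<forall>i\<in>{1..4}. pos_word_rep G (S i) (g i))"
proof -
  interpret gamma n .
  have n: "4 \<le> n" using assms(1) by simp
  have "S = alphabet"
    by (simp add: S_def alphabet_def G_def s_def x_def fun_eq_iff)
  moreover have "G\<lparr>carrier := generate G (f_family ` {1..4})\<rparr> \<cong> Z4"
    unfolding G_def
    using f_family_closed f_family_commute[OF n] inj_pow_prod4_f_family[OF n]
    by (rule G.generate_iso_Z4)
  moreover have "G\<lparr>carrier := generate G (g_family ` {1..4})\<rparr> \<cong> Z4"
    unfolding G_def
    using g_family_closed g_family_commute[OF n] inj_pow_prod4_g_family[OF n]
    by (rule G.generate_iso_Z4)
  ultimately show ?thesis
    using f_family_closed g_family_closed f_family_pos_word_rep[OF n] g_family_pos_word_rep[OF n]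
    unfolding G_def by (intro exI[of _ f_family] exI[of _ g_family]) auto
qed

end
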